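(* Fix $d\geq3$ and let $T$ be a subset of $\mathbb{N}_0^d$ whose affine span has dimension $2$. Then the $2$-completion $E_2^\infty(T)$ of $T$ equals $\Lambda(T)\cap\mathbb{N}_0^d$.
   Context: $\mathbb{N}_0=\{0,1,2,\dots\}$. For nonempty $\Gamma\subseteq\mathbb{N}_0^d$, $\Lambda(\Gamma)$ is the coset in $\mathbb{Z}^d$ generated by $\Gamma$ (smallest coset of a subgroup of $\mathbb{Z}^d$ containing $\Gamma$); each $\lambda\in\Lambda(\Gamma)$ can be written $\lambda=\gamma+\sum_{\alpha\in\Gamma,\alpha\neq\gamma}m_{\gamma,\alpha}(\alpha-\gamma)$ with $\gamma\in\Gamma$ and integers $m_{\gamma,\alpha}$, finitely many nonzero. $d(\Gamma,\lambda)$ is the infimum over all such representations of $\max\big(\sum_{m_{\gamma,\alpha}>0}m_{\gamma,\alpha},-\sum_{m_{\gamma,\alpha}<0}m_{\gamma,\alpha}\big)$, and $E_n(\Gamma)=\{\lambda\in\Lambda(\Gamma)\cap\mathbb{N}_0^d:d(\Gamma,\lambda)\leq n\}$. Set $E_n^1(T)=E_n(T)$, $E_n^{k+1}(T)=E_n(E_n^k(T))$, and the $n$-completion $E_n^\infty(T)=\bigcup_{k\geq1}E_n^k(T)$. *)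

theory Defs
  imports "HOL-Analysis.Analysis" "HOL-Library.Extended_Nat"
begin

text \<open>Points of Z^d are vectors int^'n (d = CARD('n)); N_0^d is the nonnegative orthant.\<close>

definition N0 :: "(int ^ 'n) set" where
  "N0 = {x. \<forall>i. 0 \<le> x $ i}"

definition is_subgroup :: "(int ^ 'n) set \<Rightarrow> bool" where
  "is_subgroup H \<longleftrightarrow> 0 \<in> H \<and> (\<forall>x\<in>H. \<forall>y\<in>H. x + y \<in> H) \<and> (\<forall>x\<in>H. - x \<in> H)"

definition is_coset :: "(int ^ 'n) set \<Rightarrow> bool" where
  "is_coset C \<longleftrightarrow> (\<exists>a H. is_subgroup H \<and> C = (\<lambda>h. a + h) ` H)"

definition Lam :: "(int ^ 'n) set \<Rightarrow> (int ^ 'n) set" where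
  "Lam G = \<Inter> {C. is_coset C \<and> G \<subseteq> C}"

definition is_rep :: "(int ^ 'n) set \<Rightarrow> int ^ 'n \<Rightarrow> int ^ 'n \<Rightarrow> (int ^ 'n \<Rightarrow> int) \<Rightarrow> bool" where
  "is_rep G lam g m \<longleftrightarrow> g \<in> G \<and> finite {a. m a \<noteq> 0} \<and>
     (\<forall>a. m a \<noteq> 0 \<longrightarrow> a \<in> G \<and> a \<noteq> g) \<and>
     lam = g + (\<Sum>a\<in>{a. m a \<noteq> 0}. m a *s (a - g))"

definition rep_cost :: "(int ^ 'n \<Rightarrow> int) \<Rightarrow> nat" where
  "rep_cost m = nat (max (\<Sum>a\<in>{a. m a \<noteq> 0}. max (m a) 0) (- (\<Sum>a\<in>{a. m a \<noteq> 0}. min (m a) 0)))"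

text \<open>d(Gamma, lambda) as an infimum in enat (infinity if no representation exists).\<close>
definition dist_G :: "(int ^ 'n) set \<Rightarrow> int ^ 'n \<Rightarrow> enat" where
  "dist_G G lam = Inf {enat (rep_cost m) | g m. is_rep G lam g m}"

definition E :: "nat \<Rightarrow> (int ^ 'n) set \<Rightarrow> (int ^ 'n) set" where
  "E n G = {lam \<in> Lam G \<inter> N0. dist_G G lam \<le> enat n}"

definition completion :: "nat \<Rightarrow> (int ^ 'n) set \<Rightarrow> (int ^ 'n) set" where
  "completion n T = (\<Union>k\<in>{1..}. (E n ^^ k) T)"

definition to_real :: "int ^ 'n \<Rightarrow> real ^ 'n" where
  "to_real x = (\<chi> i. real_of_int (x $ i))"

end

theory Submission
  imports Defs
begin

text \<open>
  Call \<open>C \<subseteq> N0\<close> move-closed if \<open>a + b + c - d - e \<in> C\<close> whenever \<open>a, b, c, d, e \<in> C\<close> and the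
  point lies in \<open>N0\<close>. Such a point has distance at most 2 from \<open>C\<close>, so the 2-completion of \<open>T\<close>
  is move-closed, and it lies in \<open>Lam T \<inter> N0\<close>.

  For a triangle \<open>p, q, r\<close> we say that \<open>p + s (q - p) + h (p - r)\<close> lies in row \<open>h\<close>. In a
  move-closed set, the moves \<open>2 x - y\<close> walk along lines, and an induction on the row shows that
  every lattice point \<open>p + a (q - p) + b (p - r)\<close> (\<open>a, b \<in> \<int>\<close>) of \<open>N0\<close> belongs to \<open>C\<close>; the
  intermediate points are in \<open>N0\<close> because they are nonnegative combinations of points of \<open>C\<close>.

  If \<open>C\<close> spans a plane, choose coordinates \<open>i, j\<close> on which this plane projects injectively and a
  triangle \<open>p, q, r\<close> in \<open>C\<close> with least nonzero \<open>2 \<times> 2\<close> minor in these coordinates. A point of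
  \<open>C\<close> with non-integral real coordinates \<open>(s, h)\<close> in this triangle can be moved, row by row,
  towards the edge \<open>p q\<close> until it yields a triangle in \<open>C\<close> with smaller nonzero minor. So \<open>C\<close>
  lies in the coset \<open>p + \<int> (q - p) + \<int> (p - r)\<close>, hence so does \<open>Lam C = Lam T\<close>, and
  \<open>Lam T \<inter> N0 \<subseteq> C\<close>.
\<close>

lemma N0_iff: "x \<in> N0 \<longleftrightarrow> (\<forall>i. 0 \<le> x $ i)"
  by (simp add: N0_def)

lemma N0_if_scaled_nonneg:
  assumes "0 < (c::int)" and "\<And>i. 0 \<le> c * x $ i"
  shows "x \<in> N0"
  using assms by (auto simp: N0_iff zero_le_mult_iff)

lemma N0_if_nonneg_combination:
  assumes "\<And>k. real_of_int (w $ k) = a * real_of_int (x $ k) + b * real_of_int (y $ k) + c * real_of_int (z $ k)"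
    and "0 \<le> a" "0 \<le> b" "0 \<le> c" "x \<in> N0" "y \<in> N0" "z \<in> N0"
  shows "w \<in> N0"
proof -
  have "0 \<le> real_of_int (w $ k)" for k
    using assms(2-7) unfolding assms(1) by (auto simp: N0_iff intro!: add_nonneg_nonneg mult_nonneg_nonneg)
  then show ?thesis by (auto simp: N0_iff)
qed

section \<open>Move-closed sets\<close>

locale move_closed =
  fixes C :: "(int ^ 'n) set"
  assumes subset_N0: "C \<subseteq> N0"
    and move: "\<And>a b c d e. a \<in> C \<Longrightarrow> b \<in> C \<Longrightarrow> c \<in> C \<Longrightarrow> d \<in> C \<Longrightarrow> e \<in> C
        \<Longrightarrow> a + b + c - d - e \<in> N0 \<Longrightarrow> a + b + c - d - e \<in> C"
begin

lemma move_eq: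
  "a \<in> C \<Longrightarrow> b \<in> C \<Longrightarrow> c \<in> C \<Longrightarrow> d \<in> C \<Longrightarrow> e \<in> C
    \<Longrightarrow> x = a + b + c - d - e \<Longrightarrow> x \<in> N0 \<Longrightarrow> x \<in> C"
  using move by blast

lemma mem_N0: "x \<in> C \<Longrightarrow> x \<in> N0"
  using subset_N0 by blast

lemma nonneg: "x \<in> C \<Longrightarrow> 0 \<le> x $ i"
  using subset_N0 by (auto simp: N0_iff)

lemma line_point_mem_nat:
  assumes a: "a \<in> C" and b: "b \<in> C"
    and N: "\<And>l::nat. l \<le> k \<Longrightarrow> a + int l *s (b - a) \<in> N0"
  shows "a + int k *s (b - a) \<in> C"
  using N
proof (induction k rule: induct_nat_012)
  case (ge2 k)
  have k1: "a + int (Suc k) *s (b - a) \<in> C" and k0: "a + int k *s (b - a) \<in> C"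
    using ge2 by simp_all
  show ?case
    using ge2.prems[of "Suc (Suc k)"]
    by (intro move_eq[OF k1 k1 a a k0]) (simp_all add: vec_eq_iff algebra_simps)
qed (use a b in simp_all)

lemma line_point_mem:
  assumes a: "a \<in> C" and b: "b \<in> C"
    and N: "\<And>k::int. (0 \<le> k \<and> k \<le> g) \<or> (g \<le> k \<and> k \<le> 0) \<Longrightarrow> a + k *s (b - a) \<in> N0"
  shows "a + g *s (b - a) \<in> C"
proof (cases "g \<ge> 0")
  case True
  have "a + int (nat g) *s (b - a) \<in> C"
    by (rule line_point_mem_nat[OF a b]) (use N True in \<open>auto simp: le_nat_iff\<close>)
  then show ?thesis using True by simp
next
  case False
  have reflect: "a + k *s ((2 *s a - b) - a) = a + (- k) *s (b - a)" for k
    by (simp add: vec_eq_iff algebra_simps)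
  have "a + (-1) *s (b - a) = 2 *s a - b"
    by (simp add: vec_eq_iff)
  then have "2 *s a - b \<in> N0"
    using N[of "-1"] False by simp
  then have b': "2 *s a - b \<in> C"
    by (intro move_eq[OF a a a a b]) (simp_all add: vec_eq_iff)
  have "a + int (nat (- g)) *s ((2 *s a - b) - a) \<in> C"
  proof (rule line_point_mem_nat[OF a b'])
    fix l :: nat assume "l \<le> nat (- g)"
    then show "a + int l *s ((2 *s a - b) - a) \<in> N0"
      unfolding reflect using False by (intro N) auto
  qed
  then show ?thesis using False unfolding reflect by simp
qed

lemma line_point_mem_N0:
  assumes a: "a \<in> C" and b: "b \<in> C" and g: "0 \<le> g" and N: "a + g *s (b - a) \<in> N0"
  shows "a + g *s (b - a) \<in> C"
proof (rule line_point_mem[OF a b])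
  fix k :: int assume "0 \<le> k \<and> k \<le> g \<or> g \<le> k \<and> k \<le> 0"
  then have k: "0 \<le> k" "k \<le> g" using g by auto
  show "a + k *s (b - a) \<in> N0"
  proof (cases "g = 0")
    case True
    then show ?thesis using k a mem_N0 by simp
  next
    case False
    show ?thesis
    proof (rule N0_if_scaled_nonneg[of g])
      fix i
      have "g * (a + k *s (b - a)) $ i = (g - k) * a $ i + k * (a + g *s (b - a)) $ i"
        by (simp add: algebra_simps)
      also have "\<dots> \<ge> 0" using k nonneg[OF a] N
        by (auto simp: N0_iff intro!: add_nonneg_nonneg mult_nonneg_nonneg)
      finally show "0 \<le> g * (a + k *s (b - a)) $ i" .
    qed (use g False in simp)
  qed
qed

lemma triangle_lattice_mem_one_aux:
  assumes p: "p \<in> C" and q: "q \<in> C" and r: "r \<in> C" and s: "1 \<le> s"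
    and x: "x = p + s *s (q - p) + (p - r)" and xN: "x \<in> N0"
  shows "x \<in> C"
proof -
  \<comment> \<open>\<open>x = 2 P - r\<close>, or \<open>x = 2 P + q - p - r\<close> for odd \<open>s\<close>, where \<open>P = p + (s div 2) (q - p)\<close>\<close>
  define k0 where "k0 = s div 2"
  have k0: "0 \<le> k0" "2 * k0 \<le> s" "s \<le> 2 * k0 + 1" using s unfolding k0_def by auto
  have P: "p + k0 *s (q - p) \<in> C"
  proof (rule line_point_mem[OF p q])
    fix k :: int assume "0 \<le> k \<and> k \<le> k0 \<or> k0 \<le> k \<and> k \<le> 0"
    then have kk: "0 \<le> k" "2 * k \<le> s" using k0 by auto
    show "p + k *s (q - p) \<in> N0"
    proof (rule N0_if_scaled_nonneg[of s])
      fix i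
      have "s * (p + k *s (q - p)) $ i = (s - 2 * k) * p $ i + k * r $ i + k * x $ i"
        by (simp add: x algebra_simps)
      also have "\<dots> \<ge> 0" using kk nonneg[OF p] nonneg[OF r] xN
        by (auto simp: N0_iff intro!: add_nonneg_nonneg mult_nonneg_nonneg)
      finally show "0 \<le> s * (p + k *s (q - p)) $ i" .
    qed (use s in simp)
  qed
  show ?thesis
  proof (cases "s = 2 * k0")
    case True
    show ?thesis
      by (rule move_eq[OF P P p p r]) (use True xN in \<open>simp_all add: x vec_eq_iff algebra_simps\<close>)
  next
    case False
    then have "s = 2 * k0 + 1" using k0 by simp
    then show ?thesis
      by (intro move_eq[OF P P q p r]) (use xN in \<open>simp_all add: x vec_eq_iff algebra_simps\<close>)
  qed
qed

lemma triangle_lattice_mem_one: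
  assumes p: "p \<in> C" and q: "q \<in> C" and r: "r \<in> C"
    and x: "x = p + s *s (q - p) + (p - r)" and xN: "x \<in> N0"
  shows "x \<in> C"
proof (cases "s \<ge> 1")
  case True
  show ?thesis by (rule triangle_lattice_mem_one_aux[OF p q r True x xN])
next
  case False
  have x': "x = q + (2 - s) *s (p - q) + (q - r)" by (simp add: x vec_eq_iff algebra_simps)
  show ?thesis by (rule triangle_lattice_mem_one_aux[OF q p r _ x' xN]) (use False in simp)
qed

lemma triangle_lattice_mem_pos:
  "1 \<le> h \<Longrightarrow> p \<in> C \<Longrightarrow> q \<in> C \<Longrightarrow> r \<in> C \<Longrightarrow> x = p + s *s (q - p) + int h *s (p - r)
    \<Longrightarrow> x \<in> N0 \<Longrightarrow> x \<in> C"
proof (induction h arbitrary: p q r s x rule: less_induct)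
  case (less h)
  note p = less.prems(2) and q = less.prems(3) and r = less.prems(4)
    and x = less.prems(5) and xN = less.prems(6)
  show ?case
  proof (cases "h = 1")
    case True
    then show ?thesis using triangle_lattice_mem_one[OF p q r _ xN] x by simp
  next
    case False
    then have h2: "h \<ge> 2" using less.prems(1) by simp
    \<comment> \<open>write \<open>s = h m - h'\<close> with \<open>0 \<le> h' < h\<close>; the point \<open>y\<close> of row one lies in \<open>N0\<close> and in \<open>C\<close>,
      and \<open>x\<close> has row \<open>h' < h\<close> in the triangle \<open>p, y, q\<close>\<close>
    define m where "m = - ((- s) div int h)"
    define h' where "h' = (- s) mod int h"
    have "- s = int h * ((- s) div int h) + (- s) mod int h" by simp
    then have sm: "s = int h * m - h'" unfolding m_def h'_def by linarith
    have h': "0 \<le> h'" "h' < int h" using h2 unfolding h'_def by auto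
    define y where "y = p + m *s (q - p) + (p - r)"
    have yN: "y \<in> N0"
    proof (rule N0_if_scaled_nonneg[of "int h"])
      fix i
      have "int h * y $ i = x $ i + h' * q $ i + (int h - 1 - h') * p $ i"
        by (simp add: x y_def sm algebra_simps)
      also have "\<dots> \<ge> 0" using h' nonneg[OF p] nonneg[OF q] xN
        by (auto simp: N0_iff intro!: add_nonneg_nonneg mult_nonneg_nonneg)
      finally show "0 \<le> int h * y $ i" .
    qed (use h2 in simp)
    have y: "y \<in> C"
      using less.IH[of 1 p q r y m] h2 p q r yN by (simp add: y_def)
    have x': "x = p + int h *s (y - p) + h' *s (p - q)"
      by (simp add: x y_def sm vec_eq_iff algebra_simps)
    show ?thesis
    proof (cases "h' = 0")
      case False
      then have "1 \<le> nat h'" "nat h' < h" using h' by auto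
      moreover have "x = p + int h *s (y - p) + int (nat h') *s (p - q)" using x' h' by simp
      ultimately show ?thesis using less.IH[of "nat h'" p y q x "int h"] p y q xN by simp
    next
      case True
      then have x'': "x = p + int h *s (y - p)" using x' by simp
      show ?thesis
        unfolding x'' by (rule line_point_mem_N0[OF p y]) (use xN x'' in simp_all)
    qed
  qed
qed

lemma triangle_lattice_mem:
  assumes p: "p \<in> C" and q: "q \<in> C" and r: "r \<in> C"
    and x: "x = p + a *s (q - p) + b *s (p - r)" and xN: "x \<in> N0"
  shows "x \<in> C"
proof -
  \<comment> \<open>unless \<open>x\<close> is a vertex, some relabelling of the triangle puts it in a row \<open>\<ge> 1\<close>\<close>
  consider "b \<ge> 1" | "a \<le> -1" | "a - b - 1 \<ge> 1" | "b \<le> 0" "a \<ge> 0" "a - b - 1 \<le> 0" by linarith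
  then show ?thesis
  proof cases
    case 1
    then show ?thesis using triangle_lattice_mem_pos[of "nat b" p q r x a] p q r xN x by simp
  next
    case 2
    have "x = p + (-b) *s (r - p) + int (nat (-a)) *s (p - q)"
      using 2 by (simp add: x vec_eq_iff algebra_simps)
    then show ?thesis using triangle_lattice_mem_pos[of "nat (-a)" p r q x "-b"] p q r xN 2 by simp
  next
    case 3
    have "x = q + (-b) *s (r - q) + int (nat (a - b - 1)) *s (q - p)"
      using 3 by (simp add: x vec_eq_iff algebra_simps)
    then show ?thesis using triangle_lattice_mem_pos[of "nat (a - b - 1)" q r p x "-b"] p q r xN 3 by simp
  next
    case 4
    then consider "a = 0" "b = 0" | "a = 0" "b = -1" | "a = 1" "b = 0" by linarith
    then have "x = p \<or> x = r \<or> x = q"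
      by cases (simp_all add: x vec_eq_iff)
    then show ?thesis using p q r by auto
  qed
qed

end

section \<open>Cosets and the completion\<close>

lemma is_coset_iff:
  "is_coset K \<longleftrightarrow> K \<noteq> {} \<and> (\<forall>x\<in>K. \<forall>y\<in>K. \<forall>z\<in>K. x + y - z \<in> K)"
proof
  assume "is_coset K"
  then obtain a H where H: "is_subgroup H" and K: "K = (\<lambda>h. a + h) ` H"
    unfolding is_coset_def by blast
  have H0: "0 \<in> H" and "\<And>x y z. x \<in> H \<Longrightarrow> y \<in> H \<Longrightarrow> z \<in> H \<Longrightarrow> x + y - z \<in> H"
    using H unfolding is_subgroup_def diff_conv_add_uminus by blast+
  then have "a + h1 + (a + h2) - (a + h3) \<in> K" if "h1 \<in> H" "h2 \<in> H" "h3 \<in> H" for h1 h2 h3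
    using that unfolding K by (auto intro!: image_eqI[where x = "h1 + h2 - h3"] simp: algebra_simps)
  then show "K \<noteq> {} \<and> (\<forall>x\<in>K. \<forall>y\<in>K. \<forall>z\<in>K. x + y - z \<in> K)"
    using H0 unfolding K by (force simp: add.assoc)
next
  assume K: "K \<noteq> {} \<and> (\<forall>x\<in>K. \<forall>y\<in>K. \<forall>z\<in>K. x + y - z \<in> K)"
  then obtain t where t: "t \<in> K" by blast
  define H where "H = (\<lambda>k. k - t) ` K"
  have "is_subgroup H" unfolding is_subgroup_def
  proof (intro conjI ballI)
    show "0 \<in> H" using t unfolding H_def by (auto intro!: image_eqI[where x = t])
  next
    fix x y assume "x \<in> H" "y \<in> H"
    then show "x + y \<in> H"
      using K t unfolding H_def by (auto intro!: image_eqI[where x = "x + y + t"])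
  next
    fix x assume "x \<in> H"
    then obtain k where "k \<in> K" "- x = (t + t - k) - t" unfolding H_def by auto
    moreover have "t + t - k \<in> K" using K t \<open>k \<in> K\<close> by blast
    ultimately show "- x \<in> H" unfolding H_def by (metis image_eqI)
  qed
  moreover have "K = (\<lambda>h. t + h) ` H" unfolding H_def by (auto simp: image_image)
  ultimately show "is_coset K" unfolding is_coset_def by blast
qed

lemma subset_Lam: "G \<subseteq> Lam G"
  unfolding Lam_def by auto

lemma Lam_least: "is_coset K \<Longrightarrow> G \<subseteq> K \<Longrightarrow> Lam G \<subseteq> K"
  unfolding Lam_def by auto

lemma Lam_subset_Lam: "H \<subseteq> Lam G \<Longrightarrow> Lam H \<subseteq> Lam G"
  unfolding Lam_def by blast

lemma Lam_add_diff:
  assumes "x \<in> Lam G" "y \<in> Lam G" "z \<in> Lam G"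
  shows "x + y - z \<in> Lam G"
  unfolding Lam_def
proof
  fix K assume K: "K \<in> {K. is_coset K \<and> G \<subseteq> K}"
  then have "x \<in> K" "y \<in> K" "z \<in> K" using assms unfolding Lam_def by blast+
  then show "x + y - z \<in> K" using K unfolding is_coset_iff by blast
qed

lemma E_subset: "E n G \<subseteq> Lam G \<inter> N0"
  unfolding E_def by auto

lemma dist_G_le_rep_cost: "is_rep G x g m \<Longrightarrow> dist_G G x \<le> enat (rep_cost m)"
  unfolding dist_G_def by (rule Inf_lower) blast

lemma subset_E:
  assumes "G \<subseteq> N0"
  shows "G \<subseteq> E n G"
proof
  fix g assume g: "g \<in> G"
  have "is_rep G g g (\<lambda>_. 0)" unfolding is_rep_def using g by simp
  moreover have "rep_cost (\<lambda>_. 0) = 0" by (simp add: rep_cost_def)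
  ultimately have "dist_G G g \<le> 0"
    using dist_G_le_rep_cost zero_enat_def by metis
  then have "dist_G G g \<le> enat n"
    using order_trans zero_le by blast
  then show "g \<in> E n G" unfolding E_def using g assms subset_Lam by blast
qed

lemma rep_cost_le:
  fixes m :: "int ^ 'n \<Rightarrow> int"
  assumes F: "finite F" "{y. m y \<noteq> 0} \<subseteq> F"
    and u: "\<And>y. max (m y) 0 \<le> u y" "sum u F \<le> int n"
    and v: "\<And>y. - min (m y) 0 \<le> v y" "sum v F \<le> int n"
  shows "rep_cost m \<le> n"
proof -
  have "(\<Sum>y\<in>{y. m y \<noteq> 0}. max (m y) 0) = (\<Sum>y\<in>F. max (m y) 0)"
    by (rule sum.mono_neutral_left[OF F]) auto
  also have "\<dots> \<le> sum u F" by (rule sum_mono) (rule u)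
  finally have pos: "(\<Sum>y\<in>{y. m y \<noteq> 0}. max (m y) 0) \<le> int n" using u(2) by linarith
  have "- (\<Sum>y\<in>{y. m y \<noteq> 0}. min (m y) 0) = (\<Sum>y\<in>F. - min (m y) 0)"
    by (subst sum.mono_neutral_left[OF F]) (auto simp: sum_negf)
  also have "\<dots> \<le> sum v F" by (rule sum_mono) (rule v)
  finally have neg: "- (\<Sum>y\<in>{y. m y \<noteq> 0}. min (m y) 0) \<le> int n" using v(2) by linarith
  show ?thesis unfolding rep_cost_def using pos neg by (simp add: nat_le_iff)
qed

lemma dist_G_move_le:
  assumes G: "a \<in> G" "b \<in> G" "c \<in> G" "d \<in> G" "e \<in> G"
  shows "dist_G G (a + b + c - d - e) \<le> 2"
proof -
  \<comment> \<open>write the point as \<open>c + (a - c) + (b - c) - (d - c) - (e - c)\<close>, with base point \<open>c\<close>\<close>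
  define m where "m y = (if y = c then 0
      else of_bool (y = a) + of_bool (y = b) - of_bool (y = d) - of_bool (y = e) :: int)" for y
  define F where "F = {a, b, d, e}"
  have F: "finite F" "{y. m y \<noteq> 0} \<subseteq> F" unfolding F_def m_def by auto
  have ind: "(\<Sum>y\<in>F. of_bool (y = t) *s (y - c)) = t - c" if "t \<in> F" for t
  proof -
    have "(\<Sum>y\<in>F. of_bool (y = t) *s (y - c)) = (\<Sum>y\<in>F. if y = t then t - c else 0)"
      by (rule sum.cong) auto
    then show ?thesis using that F(1) by simp
  qed
  have "(\<Sum>y\<in>{y. m y \<noteq> 0}. m y *s (y - c)) = (\<Sum>y\<in>F. m y *s (y - c))"
    by (rule sum.mono_neutral_left[OF F]) auto
  also have "\<dots> = (\<Sum>y\<in>F. of_bool (y = a) *s (y - c) + of_bool (y = b) *s (y - c)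
      - of_bool (y = d) *s (y - c) - of_bool (y = e) *s (y - c))"
    by (rule sum.cong) (auto simp: m_def vector_sadd_rdistrib vector_sub_rdistrib)
  also have "\<dots> = (a - c) + (b - c) - (d - c) - (e - c)"
    using ind[of a] ind[of b] ind[of d] ind[of e] unfolding sum.distrib sum_subtractf
    by (simp add: F_def)
  finally have "is_rep G (a + b + c - d - e) c m"
    unfolding is_rep_def
  proof (intro conjI allI impI)
    show "finite {y. m y \<noteq> 0}" by (rule finite_subset[OF F(2) F(1)])
    fix y assume "m y \<noteq> 0"
    then show "y \<in> G" "y \<noteq> c" using F(2) G unfolding F_def m_def by auto
  qed (auto simp: G(3) algebra_simps)
  moreover have "rep_cost m \<le> 2"
  proof (rule rep_cost_le[OF F, where u = "\<lambda>y. of_bool (y = a) + of_bool (y = b)"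
        and v = "\<lambda>y. of_bool (y = d) + of_bool (y = e)"])
    have one: "(\<Sum>y\<in>F. of_bool (y = t)) = (1::int)" if "t \<in> F" for t
      using that F(1) by (simp add: of_bool_def)
    show "(\<Sum>y\<in>F. of_bool (y = a) + of_bool (y = b)) \<le> int 2"
      "(\<Sum>y\<in>F. of_bool (y = d) + of_bool (y = e)) \<le> int 2"
      unfolding sum.distrib using one by (simp_all add: F_def)
  qed (auto simp: m_def)
  ultimately show ?thesis
    using dist_G_le_rep_cost order_trans enat_ord_simps(1) by (metis numeral_eq_enat)
qed

lemma move_mem_Lam:
  assumes "a \<in> Lam G" "b \<in> Lam G" "c \<in> Lam G" "d \<in> Lam G" "e \<in> Lam G"
  shows "a + b + c - d - e \<in> Lam G"
proof -
  have "(a + b - d) + c - e \<in> Lam G" by (intro Lam_add_diff assms)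
  then show ?thesis by (simp add: algebra_simps)
qed

lemma move_mem_E:
  assumes "a \<in> G" "b \<in> G" "c \<in> G" "d \<in> G" "e \<in> G" and "a + b + c - d - e \<in> N0"
  shows "a + b + c - d - e \<in> E 2 G"
  using assms dist_G_move_le[of a G b c d e] move_mem_Lam[of a G b c d e] subset_Lam
  unfolding E_def by (auto simp: numeral_eq_enat)

lemma E_iterate_subset_N0: "T \<subseteq> N0 \<Longrightarrow> (E n ^^ k) T \<subseteq> N0"
proof (induction k)
  case (Suc k)
  show ?case using E_subset[of n "(E n ^^ k) T"] by simp
qed simp

lemma E_iterate_subset_Lam: "(E n ^^ k) T \<subseteq> Lam T"
proof (induction k)
  case (Suc k)
  have "Lam ((E n ^^ k) T) \<subseteq> Lam T" by (rule Lam_subset_Lam[OF Suc.IH])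
  then show ?case using E_subset[of n "(E n ^^ k) T"] by auto
qed (simp add: subset_Lam)

lemma E_iterate_mono: "T \<subseteq> N0 \<Longrightarrow> k \<le> l \<Longrightarrow> (E n ^^ k) T \<subseteq> (E n ^^ l) T"
  by (rule lift_Suc_mono_le[of "\<lambda>k. (E n ^^ k) T"]) (simp_all add: subset_E E_iterate_subset_N0)

lemma mem_completion_iff:
  assumes "T \<subseteq> N0"
  shows "x \<in> completion n T \<longleftrightarrow> (\<forall>\<^sub>F k in sequentially. x \<in> (E n ^^ k) T)"
proof
  assume "x \<in> completion n T"
  then obtain k where "x \<in> (E n ^^ k) T" unfolding completion_def by blast
  then show "\<forall>\<^sub>F k in sequentially. x \<in> (E n ^^ k) T"
    unfolding eventually_sequentially using E_iterate_mono[OF assms] by blast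
next
  assume "\<forall>\<^sub>F k in sequentially. x \<in> (E n ^^ k) T"
  then obtain k where "x \<in> (E n ^^ Suc k) T"
    unfolding eventually_sequentially by (meson le_SucI order_refl)
  then show "x \<in> completion n T" unfolding completion_def by force
qed

lemma completion_subset:
  assumes "T \<subseteq> N0"
  shows "completion n T \<subseteq> Lam T \<inter> N0"
proof
  fix x assume "x \<in> completion n T"
  then obtain k where "x \<in> (E n ^^ k) T" unfolding completion_def by blast
  then show "x \<in> Lam T \<inter> N0" using E_iterate_subset_N0[OF assms] E_iterate_subset_Lam by blast
qed

lemma subset_completion: "T \<subseteq> N0 \<Longrightarrow> T \<subseteq> completion n T"
  unfolding completion_def using subset_E[of T n] by (intro subsetI UN_I[of 1]) auto

lemma move_closed_completion:
  assumes T: "T \<subseteq> N0"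
  shows "move_closed (completion 2 T)"
proof
  show "completion 2 T \<subseteq> N0" using completion_subset[OF T] by blast
  fix a b c d e
  assume "a \<in> completion 2 T" "b \<in> completion 2 T" "c \<in> completion 2 T"
    "d \<in> completion 2 T" "e \<in> completion 2 T" and N: "a + b + c - d - e \<in> N0"
  then have "\<forall>\<^sub>F k in sequentially. a \<in> (E 2 ^^ k) T \<and> b \<in> (E 2 ^^ k) T \<and> c \<in> (E 2 ^^ k) T
      \<and> d \<in> (E 2 ^^ k) T \<and> e \<in> (E 2 ^^ k) T"
    unfolding mem_completion_iff[OF T] by (intro eventually_conj)
  then have "\<forall>\<^sub>F k in sequentially. a + b + c - d - e \<in> (E 2 ^^ Suc k) T"
    by (rule eventually_mono) (auto intro!: move_mem_E N)
  then show "a + b + c - d - e \<in> completion 2 T"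
    unfolding mem_completion_iff[OF T]
    by (rule eventually_sequentially_Suc[where P = "\<lambda>k. a + b + c - d - e \<in> (E 2 ^^ k) T", THEN iffD1])
qed

section \<open>Coordinates with respect to a triangle\<close>

definition minor :: "'n \<Rightarrow> 'n \<Rightarrow> int ^ 'n \<Rightarrow> int ^ 'n \<Rightarrow> int" where
  "minor i j x y = x $ i * y $ j - x $ j * y $ i"

definition coords :: "int ^ 'n \<Rightarrow> int ^ 'n \<Rightarrow> int ^ 'n \<Rightarrow> int ^ 'n \<Rightarrow> real \<Rightarrow> real \<Rightarrow> bool" where
  "coords p q r z s h \<longleftrightarrow> (\<forall>k. real_of_int (z $ k) = real_of_int (p $ k)
      + s * (real_of_int (q $ k) - real_of_int (p $ k)) + h * (real_of_int (p $ k) - real_of_int (r $ k)))"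

lemma coordsD: "coords p q r z s h \<Longrightarrow> real_of_int (z $ k) = real_of_int (p $ k)
      + s * (real_of_int (q $ k) - real_of_int (p $ k)) + h * (real_of_int (p $ k) - real_of_int (r $ k))"
  by (simp add: coords_def)

lemma coords_swap: "coords p q r z s h \<Longrightarrow> coords p r q z (- h) (- s)"
  unfolding coords_def by (simp add: algebra_simps)

lemma coords_rotate: "coords p q r z s h \<Longrightarrow> coords q r p z (- h) (s - 1 - h)"
  unfolding coords_def by (simp add: algebra_simps)

lemma minor_coords: "coords p q r z s h \<Longrightarrow>
    real_of_int (minor i j (q - p) (z - p)) = - h * real_of_int (minor i j (q - p) (r - p))"
  by (simp add: minor_def coordsD[of p q r z s h i] coordsD[of p q r z s h j] algebra_simps)

context move_closed
begin

lemma segment_point_N0: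
  assumes p: "p \<in> C" and r: "r \<in> C" and z: "z \<in> C"
    and cz: "coords p q r z s h" and h: "h \<ge> 1" and s: "s \<noteq> 0"
    and k: "(0 \<le> k \<and> k \<le> s / (h + 1)) \<or> (s / (h + 1) \<le> k \<and> k \<le> 0)"
  shows "p + k *s (q - p) \<in> N0"
proof (rule N0_if_nonneg_combination[where a = "1 - k * (h + 1) / s" and b = "k / s" and c = "k * h / s"
      and x = p and y = z and z = r])
  fix m
  show "real_of_int ((p + k *s (q - p)) $ m) = (1 - k * (h + 1) / s) * real_of_int (p $ m)
     + k / s * real_of_int (z $ m) + k * h / s * real_of_int (r $ m)"
    using s by (simp add: coordsD[OF cz] field_simps)
next
  have hp: "h + 1 > 0" using h by simp
  consider "s > 0" | "s < 0" using s by linarith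
  then have "0 \<le> k / s \<and> 0 \<le> k * h / s \<and> k * (h + 1) / s \<le> 1"
  proof cases
    case 1
    then have "s / (h + 1) > 0" using hp by simp
    then have "0 \<le> k" "k * (h + 1) \<le> s" using k hp by (auto simp: pos_le_divide_eq)
    then show ?thesis using 1 h by (auto simp: divide_le_eq)
  next
    case 2
    then have "s / (h + 1) < 0" using hp by (simp add: divide_less_0_iff)
    then have "k \<le> 0" "s \<le> k * (h + 1)" using k hp by (auto simp: pos_divide_le_eq)
    then show ?thesis using 2 h by (auto simp: divide_le_eq zero_le_divide_iff mult_le_0_iff)
  qed
  then show "0 \<le> 1 - k * (h + 1) / s" "0 \<le> k / s" "0 \<le> k * h / s" by auto
qed (use mem_N0 p z r in auto)

text \<open>The point \<open>z + r - p - k (q - p)\<close> has coordinates \<open>(s - k, h - 1)\<close>.\<close>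

lemma lower_point_mem_pos:
  assumes p: "p \<in> C" and q: "q \<in> C" and r: "r \<in> C" and z: "z \<in> C"
    and cz: "coords p q r z s h" and h: "h \<ge> 1" and s: "s > 0"
    and k0: "0 \<le> k" and k1: "k \<ge> 1 \<Longrightarrow> k - 1 \<le> s / (h + 1)"
    and wN: "z + r - p - k *s (q - p) \<in> N0"
  shows "z + r - p - k *s (q - p) \<in> C"
proof -
  define e :: int where "e = (if k \<ge> 1 then 1 else 0)"
  define d where "d = k - e"
  have pe: "p + e *s (q - p) \<in> C"
    using p q by (cases "k \<ge> 1") (simp_all add: e_def)
  have d0: "0 \<le> d" and ds: "d \<le> s / (h + 1)"
  proof -
    show "0 \<le> d" using k0 unfolding d_def e_def by auto
    have "s / (h+1) > 0" using s h by simp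
    then show "d \<le> s / (h + 1)" using k1 k0 unfolding d_def e_def by (cases "k \<ge> 1") auto
  qed
  have pd: "p + d *s (q - p) \<in> C"
  proof (rule line_point_mem[OF p q])
    fix k' :: int assume "0 \<le> k' \<and> k' \<le> d \<or> d \<le> k' \<and> k' \<le> 0"
    then have "0 \<le> k' \<and> k' \<le> s / (h + 1)" using d0 ds by auto
    then show "p + k' *s (q - p) \<in> N0" using segment_point_N0[OF p r z cz h] s by auto
  qed
  show ?thesis
    by (rule move_eq[OF z r p pd pe]) (use wN in \<open>simp_all add: d_def vec_eq_iff algebra_simps\<close>)
qed

lemma lower_point_mem_neg:
  assumes p: "p \<in> C" and q: "q \<in> C" and r: "r \<in> C" and z: "z \<in> C"
    and cz: "coords p q r z s h" and h: "h \<ge> 1" and s: "s < 0"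
    and k0: "k \<le> -1" and k1: "s / (h + 1) \<le> k + 1"
    and wN: "z + r - p - k *s (q - p) \<in> N0"
  shows "z + r - p - k *s (q - p) \<in> C"
proof -
  have pk: "p + (k + 1) *s (q - p) \<in> C"
  proof (rule line_point_mem[OF p q])
    fix k' :: int assume "0 \<le> k' \<and> k' \<le> k + 1 \<or> k + 1 \<le> k' \<and> k' \<le> 0"
    then have "s / (h + 1) \<le> k' \<and> k' \<le> 0" using k0 k1 by auto
    then show "p + k' *s (q - p) \<in> N0" using segment_point_N0[OF p r z cz h] s by auto
  qed
  show ?thesis
    by (rule move_eq[OF z r q pk p]) (use wN in \<open>simp_all add: vec_eq_iff algebra_simps\<close>)
qed

lemma lower_point_N0_ceiling:
  assumes p: "p \<in> C" and q: "q \<in> C" and z: "z \<in> C"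
    and cz: "coords p q r z s h" and h: "h \<ge> 1"
    and gap: "h * \<lceil>s / h\<rceil> - s > h - 1"
  shows "z + r - p - (\<lceil>s / h\<rceil> - 1) *s (q - p) \<in> N0"
proof -
  define m where "m = \<lceil>s / h\<rceil>"
  have hp: "h > 0" using h by simp
  have m1: "real_of_int m < s / h + 1" unfolding m_def by linarith
  then have m1': "s / h - (m - 1) > 0" by simp
  have b2': "s / h - (m - 1) \<le> 1 / h"
  proof -
    have "h * m - s > h - 1" using gap unfolding m_def by simp
    then have "s - h * (m - 1) < 1" by (simp add: algebra_simps)
    then have "(s - h * (m - 1)) / h \<le> 1 / h" using hp by (simp add: divide_right_mono)
    then show ?thesis using hp by (simp add: diff_divide_distrib)
  qed
  show ?thesis unfolding m_def[symmetric]
  proof (rule N0_if_nonneg_combination[where a = "(h - 1) / h" and b = "s / h - (m - 1)" and c = "1 / h - (s / h - (m - 1))"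
        and x = z and y = q and z = p])
    fix k
    show "real_of_int ((z + r - p - (m - 1) *s (q - p)) $ k) = (h - 1) / h * real_of_int (z $ k)
        + (s / h - (m - 1)) * real_of_int (q $ k) + (1 / h - (s / h - (m - 1))) * real_of_int (p $ k)"
      using hp by (simp add: coordsD[OF cz] field_simps)
  qed (use h m1' b2' mem_N0 p q z in auto)
qed

lemma lower_point_N0_between:
  assumes p: "p \<in> C" and r: "r \<in> C" and z: "z \<in> C"
    and cz: "coords p q r z s h" and h: "h \<ge> 1"
    and k: "(s > 0 \<and> s / (h + 1) \<le> k \<and> k \<le> s / h) \<or> (s < 0 \<and> s / h \<le> k \<and> k \<le> s / (h + 1))"
  shows "z + r - p - k *s (q - p) \<in> N0"
proof -
  have hp: "h > 0" "h + 1 > 0" using h by simp_all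
  have s0: "s \<noteq> 0" using k by auto
  have wts: "0 \<le> k * (h + 1) / s - 1 \<and> 0 \<le> 1 - k * h / s \<and> 0 \<le> 1 - k / s"
  proof (cases "s > 0")
    case True
    then have kk: "s / (h + 1) \<le> k" "k \<le> s / h" using k by auto
    have 1: "s \<le> k * (h+1)" using kk(1) hp by (simp add: pos_divide_le_eq)
    have 2: "k * h \<le> s" using kk(2) hp by (simp add: pos_le_divide_eq)
    have "s / h \<le> s" using True h by (simp add: divide_le_eq mult_le_cancel_left1)
    then have 3: "k \<le> s" using kk by linarith
    show ?thesis using 1 2 3 True by (auto simp: field_simps)
  next
    case False
    then have sn: "s < 0" using s0 by simp
    then have kk: "s / h \<le> k" "k \<le> s / (h + 1)" using k by auto
    have 1: "k * (h+1) \<le> s" using kk(2) hp by (simp add: pos_le_divide_eq)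
    have 2: "s \<le> k * h" using kk(1) hp by (simp add: pos_divide_le_eq)
    have "s \<le> s / h" using sn h by (simp add: le_divide_eq mult_le_cancel_left1)
    then have 3: "s \<le> k" using kk by linarith
    show ?thesis using 1 2 3 sn by (auto simp: field_simps)
  qed
  show ?thesis
  proof (rule N0_if_nonneg_combination[where a = "k * (h + 1) / s - 1" and b = "1 - k * h / s" and c = "1 - k / s"
        and x = p and y = r and z = z])
    fix m
    show "real_of_int ((z + r - p - k *s (q - p)) $ m) = (k * (h + 1) / s - 1) * real_of_int (p $ m)
        + (1 - k * h / s) * real_of_int (r $ m) + (1 - k / s) * real_of_int (z $ m)"
      using s0 by (simp add: coordsD[OF cz] field_simps)
  qed (use wts mem_N0 p r z in auto)
qed

lemma lower_point_mem_exists_pos: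
  assumes p: "p \<in> C" and q: "q \<in> C" and r: "r \<in> C" and z: "z \<in> C"
    and cz: "coords p q r z s h" and h: "h \<ge> 1" and s: "s > 0"
    and gap: "h * \<lceil>s / h\<rceil> - s > h - 1"
  shows "\<exists>k::int. z + r - p - k *s (q - p) \<in> C"
proof -
  define c where "c = \<lceil>s / (h + 1)\<rceil>"
  have c: "s / (h + 1) \<le> c" "c - 1 < s / (h + 1)" unfolding c_def by linarith+
  have "s / (h + 1) > 0" "s / h > 0" using s h by simp_all
  show ?thesis
  proof (cases "c \<le> s / h")
    case True
    have "z + r - p - c *s (q - p) \<in> N0"
      by (rule lower_point_N0_between[OF p r z cz h]) (use s c True in auto)
    moreover have "0 \<le> c" using c \<open>s / (h + 1) > 0\<close> by linarith
    ultimately have "z + r - p - c *s (q - p) \<in> C"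
      by (intro lower_point_mem_pos[OF p q r z cz h s]) (use c in auto)
    then show ?thesis ..
  next
    case False
    have "0 \<le> \<lceil>s / h\<rceil> - 1" "\<lceil>s / h\<rceil> - 1 - 1 \<le> s / (h + 1)"
      using False c \<open>s / h > 0\<close> by linarith+
    then show ?thesis
      using lower_point_mem_pos[OF p q r z cz h s] lower_point_N0_ceiling[OF p q z cz h gap] by blast
  qed
qed

lemma lower_point_mem_exists_neg:
  assumes p: "p \<in> C" and q: "q \<in> C" and r: "r \<in> C" and z: "z \<in> C"
    and cz: "coords p q r z s h" and h: "h \<ge> 1" and s: "s < 0"
    and gap: "h * \<lceil>s / h\<rceil> - s > h - 1"
  shows "\<exists>k::int. z + r - p - k *s (q - p) \<in> C"
proof -
  define c where "c = \<lfloor>s / (h + 1)\<rfloor>"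
  have c: "c \<le> s / (h + 1)" "s / (h + 1) < c + 1" unfolding c_def by linarith+
  have "s / (h + 1) < 0" "s / h < 0" using s h by (simp_all add: divide_less_0_iff)
  show ?thesis
  proof (cases "s / h \<le> c")
    case True
    have "z + r - p - c *s (q - p) \<in> N0"
      by (rule lower_point_N0_between[OF p r z cz h]) (use s c True in auto)
    moreover have "c \<le> -1" using c \<open>s / (h + 1) < 0\<close> by linarith
    ultimately have "z + r - p - c *s (q - p) \<in> C"
      by (intro lower_point_mem_neg[OF p q r z cz h s]) (use c in auto)
    then show ?thesis ..
  next
    case False
    have "c < \<lceil>s / h\<rceil>" using False by linarith
    then have "\<lceil>s / h\<rceil> - 1 \<le> -1" "s / (h + 1) \<le> (\<lceil>s / h\<rceil> - 1) + 1"
      using c \<open>s / h < 0\<close> by linarith+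
    then show ?thesis
      using lower_point_mem_neg[OF p q r z cz h s] lower_point_N0_ceiling[OF p q z cz h gap] by blast
  qed
qed

end

section \<open>Triangles of least minor\<close>

locale min_minor = move_closed C for C :: "(int ^ 'n) set" +
  fixes i j :: 'n and D :: int
  assumes D_pos: "0 < D"
    and D_le_minor: "\<And>a b c. a \<in> C \<Longrightarrow> b \<in> C \<Longrightarrow> c \<in> C \<Longrightarrow> minor i j (b - a) (c - a) \<noteq> 0
        \<Longrightarrow> D \<le> \<bar>minor i j (b - a) (c - a)\<bar>"
begin

lemma minor_multiple:
  assumes "a \<in> C" "b \<in> C" "c \<in> C"
    and t: "real_of_int (minor i j (b - a) (c - a)) = t * real_of_int Dv" and Dv: "\<bar>Dv\<bar> = D"
  shows "t = 0 \<or> 1 \<le> \<bar>t\<bar>"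
proof (rule ccontr)
  assume "\<not> (t = 0 \<or> 1 \<le> \<bar>t\<bar>)"
  then have "0 < \<bar>t\<bar>" "\<bar>t\<bar> < 1" by auto
  moreover have X: "real_of_int \<bar>minor i j (b - a) (c - a)\<bar> = \<bar>t\<bar> * real_of_int D"
    using t Dv by (metis abs_mult of_int_abs)
  ultimately have "0 < real_of_int \<bar>minor i j (b - a) (c - a)\<bar>"
    "real_of_int \<bar>minor i j (b - a) (c - a)\<bar> < real_of_int D"
    using D_pos by simp_all
  then have "minor i j (b - a) (c - a) \<noteq> 0" "\<bar>minor i j (b - a) (c - a)\<bar> < D"
    by linarith+
  then show False using D_le_minor[OF assms(1-3)] by simp
qed

lemma line_param_Ints:
  assumes a: "a \<in> C" and b: "b \<in> C" and c: "c \<in> C" and z: "z \<in> C"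
    and Dv: "\<bar>minor i j (b - a) (c - a)\<bar> = D"
    and zc: "\<And>k. real_of_int (z $ k) = real_of_int (a $ k) + f * (real_of_int (b $ k) - real_of_int (a $ k))"
  shows "f \<in> \<int>"
proof (rule ccontr)
  assume f: "f \<notin> \<int>"
  \<comment> \<open>round \<open>f\<close> towards \<open>0\<close>: the lattice point \<open>a + g (b - a)\<close> lies between \<open>a\<close> and \<open>z\<close>\<close>
  define g :: int where "g = (if f > 0 then \<lfloor>f\<rfloor> else \<lceil>f\<rceil>)"
  have f0: "f \<noteq> 0" using f by auto
  have "f \<noteq> of_int g" using f by auto
  moreover have "\<bar>f - g\<bar> < 1" unfolding g_def by (auto simp: abs_if) linarith+
  ultimately have fg: "\<not> (f - g = 0 \<or> 1 \<le> \<bar>f - g\<bar>)" by auto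
  have G: "a + g *s (b - a) \<in> C"
  proof (rule line_point_mem[OF a b])
    fix k :: int assume k: "0 \<le> k \<and> k \<le> g \<or> g \<le> k \<and> k \<le> 0"
    have kf: "0 \<le> k / f \<and> k / f \<le> 1"
    proof (cases "f > 0")
      case True
      then have "g = \<lfloor>f\<rfloor>" "0 \<le> g" unfolding g_def by auto
      then have "0 \<le> k" "real_of_int k \<le> f" using k by linarith+
      then show ?thesis using True by auto
    next
      case False
      then have fn: "f < 0" using f0 by simp
      then have "g = \<lceil>f\<rceil>" "g \<le> 0" unfolding g_def by auto
      then have "k \<le> 0" "f \<le> real_of_int k" using k by linarith+
      then show ?thesis using fn by (auto simp: divide_le_eq_1 zero_le_divide_iff)
    qed
    show "a + k *s (b - a) \<in> N0"
    proof (rule N0_if_nonneg_combination[where a = "1 - k / f" and b = "k / f" and c = 0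
          and x = a and y = z and z = a])
      fix m
      show "real_of_int ((a + k *s (b - a)) $ m) = (1 - k / f) * real_of_int (a $ m)
          + k / f * real_of_int (z $ m) + 0 * real_of_int (a $ m)"
        using f0 by (simp add: zc field_simps)
    qed (use kf mem_N0 a z in auto)
  qed
  have "real_of_int (minor i j (z - (a + g *s (b - a))) (c - (a + g *s (b - a))))
      = (f - g) * real_of_int (minor i j (b - a) (c - a))"
    by (simp add: minor_def zc algebra_simps)
  then show False using minor_multiple[OF G z c _ Dv] fg by blast
qed

lemma coords_descent:
  assumes p: "p \<in> C" and q: "q \<in> C" and r: "r \<in> C" and z: "z \<in> C"
    and Dv: "\<bar>minor i j (q - p) (r - p)\<bar> = D" and cz: "coords p q r z s h" and h: "1 \<le> h"
  obtains p' q' r' z' s' h' where "p' \<in> C" "q' \<in> C" "r' \<in> C" "z' \<in> C"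
    "\<bar>minor i j (q' - p') (r' - p')\<bar> = D" "coords p' q' r' z' s' h'" "0 \<le> h'" "h' \<le> h - 1"
    "s' \<in> \<int> \<Longrightarrow> h' \<in> \<int> \<Longrightarrow> s \<in> \<int> \<and> h \<in> \<int>"
proof (cases "h * \<lceil>s / h\<rceil> - s \<le> h - 1")
  case True
  \<comment> \<open>replace \<open>r\<close> by the lattice point \<open>y\<close> of row one next to \<open>z\<close>; in the triangle \<open>p, y, q\<close>
    the point \<open>z\<close> lies in row \<open>h \<lceil>s / h\<rceil> - s\<close>\<close>
  define m where "m = \<lceil>s / h\<rceil>"
  define y where "y = p + m *s (q - p) + 1 *s (p - r)"
  have m: "s / h \<le> m" "m < s / h + 1" unfolding m_def by linarith+
  have "s \<le> h * m" using m(1) h by (simp add: divide_le_eq mult.commute)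
  have "m - s / h \<le> 1 - 1 / h"
  proof -
    have "(h * m - s) / h \<le> (h - 1) / h" using True h unfolding m_def by (simp add: divide_right_mono)
    then show ?thesis using h by (simp add: diff_divide_distrib)
  qed
  have "y \<in> N0"
  proof (rule N0_if_nonneg_combination[where a = "1 / h" and b = "m - s / h" and c = "1 - 1 / h - (m - s / h)"
        and x = z and y = q and z = p])
    fix k
    show "real_of_int (y $ k) = 1 / h * real_of_int (z $ k) + (m - s / h) * real_of_int (q $ k)
        + (1 - 1 / h - (m - s / h)) * real_of_int (p $ k)"
      using h by (simp add: y_def coordsD[OF cz] field_simps)
  qed (use h m \<open>m - s / h \<le> 1 - 1 / h\<close> mem_N0 p q z in auto)
  then have y: "y \<in> C" by (rule triangle_lattice_mem[OF p q r y_def])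
  have "\<bar>minor i j (y - p) (q - p)\<bar> = D"
    using Dv by (simp add: y_def minor_def algebra_simps)
  moreover have "coords p y q z h (h * m - s)"
    unfolding coords_def by (simp add: y_def coordsD[OF cz] algebra_simps)
  ultimately show ?thesis
  proof (rule that[OF p y q z])
    show "0 \<le> h * m - s" "h * m - s \<le> h - 1" using \<open>s \<le> h * m\<close> True unfolding m_def by simp_all
    assume "h \<in> \<int>" "h * m - s \<in> \<int>"
    then have "h * m - (h * m - s) \<in> \<int>" by (intro Ints_diff Ints_mult) simp_all
    then show "s \<in> \<int> \<and> h \<in> \<int>" using \<open>h \<in> \<int>\<close> by simp
  qed
next
  case False
  \<comment> \<open>move \<open>z\<close> down one row, along \<open>r - p\<close>\<close>
  have "s \<noteq> 0" using False h by auto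
  then obtain k :: int where w: "z + r - p - k *s (q - p) \<in> C"
    using lower_point_mem_exists_pos[OF p q r z cz h] lower_point_mem_exists_neg[OF p q r z cz h] False
    by (cases "s > 0") auto
  have "coords p q r (z + r - p - k *s (q - p)) (s - k) (h - 1)"
    unfolding coords_def by (simp add: coordsD[OF cz] algebra_simps)
  then show ?thesis
  proof (rule that[OF p q r w Dv])
    show "0 \<le> h - 1" "h - 1 \<le> h - 1" using h by simp_all
    assume "s - k \<in> \<int>" "h - 1 \<in> \<int>"
    then have "(s - k) + k \<in> \<int>" "(h - 1) + 1 \<in> \<int>" by (intro Ints_add; simp)+
    then show "s \<in> \<int> \<and> h \<in> \<int>" by simp
  qed
qed

lemma coords_Ints_nonneg:
  "h < real n \<Longrightarrow> 0 \<le> h \<Longrightarrow> p \<in> C \<Longrightarrow> q \<in> C \<Longrightarrow> r \<in> C \<Longrightarrow> z \<in> C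
    \<Longrightarrow> \<bar>minor i j (q - p) (r - p)\<bar> = D \<Longrightarrow> coords p q r z s h \<Longrightarrow> s \<in> \<int> \<and> h \<in> \<int>"
proof (induction n arbitrary: p q r z s h)
  case 0
  then show ?case by simp
next
  case (Suc n)
  note pqrz = Suc.prems(3-6) and Dv = Suc.prems(7) and cz = Suc.prems(8)
  consider "h = 0" | "0 < h" "h < 1" | "1 \<le> h" using Suc.prems(2) by linarith
  then show ?case
  proof cases
    case 1
    then have "s \<in> \<int>" using line_param_Ints[OF pqrz Dv] coordsD[OF cz] by simp
    then show ?thesis using 1 by simp
  next
    case 2
    then show ?thesis using minor_multiple[OF Suc.prems(3,4,6) minor_coords[OF cz] Dv] by simp
  next
    case 3
    obtain p' q' r' z' s' h' where descent: "p' \<in> C" "q' \<in> C" "r' \<in> C" "z' \<in> C"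
      "\<bar>minor i j (q' - p') (r' - p')\<bar> = D" "coords p' q' r' z' s' h'"
      and h': "0 \<le> h'" "h' \<le> h - 1"
      and lift: "s' \<in> \<int> \<Longrightarrow> h' \<in> \<int> \<Longrightarrow> s \<in> \<int> \<and> h \<in> \<int>"
      using coords_descent[OF pqrz Dv cz 3] by blast
    have "h' < real n" using Suc.prems(1) h' by simp
    then have "s' \<in> \<int> \<and> h' \<in> \<int>" using Suc.IH[OF _ h'(1) descent] by blast
    then show ?thesis using lift by blast
  qed
qed

lemma coords_Ints:
  assumes p: "p \<in> C" and q: "q \<in> C" and r: "r \<in> C" and z: "z \<in> C"
    and Dv: "\<bar>minor i j (q - p) (r - p)\<bar> = D" and cz: "coords p q r z s h"
  shows "s \<in> \<int> \<and> h \<in> \<int>"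
proof -
  have "minor i j (r - p) (q - p) = - minor i j (q - p) (r - p)"
    "minor i j (r - q) (p - q) = minor i j (q - p) (r - p)"
    unfolding minor_def by (simp_all add: algebra_simps)
  then have Dv': "\<bar>minor i j (r - p) (q - p)\<bar> = D" "\<bar>minor i j (r - q) (p - q)\<bar> = D"
    using Dv by simp_all
  have bound: "x < real (nat \<lceil>x\<rceil> + 1)" for x by linarith
  \<comment> \<open>relabel the triangle so that the second coordinate becomes nonnegative\<close>
  consider "0 \<le> h" | "s \<le> 0" | "0 \<le> s - 1 - h" | "-1 < h" "h < 0" by linarith
  then show ?thesis
  proof cases
    case 1
    show ?thesis by (rule coords_Ints_nonneg[OF bound 1 p q r z Dv cz])
  next
    case 2
    then have "0 \<le> - s" by simp
    from coords_Ints_nonneg[OF bound this p r q z Dv'(1) coords_swap[OF cz]]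
    show ?thesis by (simp add: minus_in_Ints_iff)
  next
    case 3
    from coords_Ints_nonneg[OF bound 3 q r p z Dv'(2) coords_rotate[OF cz]]
    have "h \<in> \<int>" "(s - 1 - h) + 1 + h \<in> \<int>" by (auto simp: minus_in_Ints_iff)
    then show ?thesis by simp
  next
    case 4
    have "- h = 0 \<or> 1 \<le> \<bar>- h\<bar>" by (rule minor_multiple[OF p q z minor_coords[OF cz] Dv])
    then show ?thesis using 4 by linarith
  qed
qed

end

section \<open>Planar move-closed sets\<close>

lemma to_real_component [simp]: "to_real x $ k = real_of_int (x $ k)"
  by (simp add: to_real_def)

lemma to_real_diff: "to_real (x - y) = to_real x - to_real y"
  by (simp add: vec_eq_iff)

lemma collinear_to_real_iff:
  "collinear {to_real p, to_real q, to_real r} \<longleftrightarrow> (\<forall>i j. minor i j (q - p) (r - p) = 0)"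
proof -
  have "collinear {to_real p, to_real q, to_real r} \<longleftrightarrow>
      to_real (q - p) = 0 \<or> to_real (r - p) = 0 \<or> (\<exists>c. to_real (r - p) = c *\<^sub>R to_real (q - p))"
    by (subst insert_commute) (simp add: collinear_3 collinear_lemma to_real_diff)
  also have "\<dots> \<longleftrightarrow> (\<forall>i j. minor i j (q - p) (r - p) = 0)"
  proof
    assume "to_real (q - p) = 0 \<or> to_real (r - p) = 0 \<or> (\<exists>c. to_real (r - p) = c *\<^sub>R to_real (q - p))"
    then have "real_of_int (minor i j (q - p) (r - p)) = 0" for i j
    proof (elim disjE exE)
      assume "to_real (q - p) = 0"
      then have "q $ k = p $ k" for k by (simp add: vec_eq_iff)
      then show ?thesis by (simp add: minor_def)
    next
      assume "to_real (r - p) = 0"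
      then have "r $ k = p $ k" for k by (simp add: vec_eq_iff)
      then show ?thesis by (simp add: minor_def)
    next
      fix c assume "to_real (r - p) = c *\<^sub>R to_real (q - p)"
      then have r: "real_of_int (r $ k) = real_of_int (p $ k) + c * (real_of_int (q $ k) - real_of_int (p $ k))"
        for k by (simp add: vec_eq_iff algebra_simps)
      show ?thesis unfolding minor_def by (simp only: of_int_diff of_int_mult vector_minus_component r)
        (simp add: algebra_simps)
    qed
    then show "\<forall>i j. minor i j (q - p) (r - p) = 0" by simp
  next
    assume minors: "\<forall>i j. minor i j (q - p) (r - p) = 0"
    show "to_real (q - p) = 0 \<or> to_real (r - p) = 0 \<or> (\<exists>c. to_real (r - p) = c *\<^sub>R to_real (q - p))"
    proof (cases "q = p")
      case False
      then obtain i where i: "(q - p) $ i \<noteq> 0" by (auto simp: vec_eq_iff)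
      have "to_real (r - p) = (real_of_int ((r - p) $ i) / real_of_int ((q - p) $ i)) *\<^sub>R to_real (q - p)"
      proof (rule vec_eq_iff[THEN iffD2], intro allI)
        fix k
        have "real_of_int ((q - p) $ i) * real_of_int ((r - p) $ k)
            = real_of_int ((r - p) $ i) * real_of_int ((q - p) $ k)"
          using minors[rule_format, of i k] unfolding minor_def by (metis eq_iff_diff_eq_0 mult.commute of_int_mult)
        then show "to_real (r - p) $ k
            = ((real_of_int ((r - p) $ i) / real_of_int ((q - p) $ i)) *\<^sub>R to_real (q - p)) $ k"
          using i by (simp add: field_simps)
      qed
      then show ?thesis by blast
    qed (simp add: vec_eq_iff)
  qed
  finally show ?thesis .
qed

lemma nonzero_minor_exists:
  assumes "aff_dim (to_real ` C) = 2"
  obtains p q r i j where "p \<in> C" "q \<in> C" "r \<in> C" "minor i j (q - p) (r - p) \<noteq> 0"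
proof -
  have "\<not> collinear (to_real ` C)" using assms by (simp add: collinear_aff_dim)
  moreover have "collinear (to_real ` C)" if triples: "\<And>a b c. a \<in> C \<Longrightarrow> b \<in> C \<Longrightarrow> c \<in> C
      \<Longrightarrow> collinear {to_real a, to_real b, to_real c}"
  proof (cases "\<exists>a\<in>C. \<exists>b\<in>C. to_real a \<noteq> to_real b")
    case True
    then obtain a b where ab: "a \<in> C" "b \<in> C" "to_real a \<noteq> to_real b" by blast
    have "\<forall>x\<in>to_real ` C. collinear {to_real a, to_real b, x}" using triples ab by blast
    then have "collinear (insert (to_real a) (insert (to_real b) (to_real ` C)))"
      using collinear_triples[OF ab(3)] by blast
    moreover have "to_real a \<in> to_real ` C" "to_real b \<in> to_real ` C" using ab by auto
    ultimately show ?thesis by (simp add: insert_absorb)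
  next
    case False
    show ?thesis
    proof (cases "C = {}")
      case False
      then obtain a where "a \<in> C" by blast
      then have "to_real ` C \<subseteq> {to_real a}" using \<open>\<not> (\<exists>a\<in>C. \<exists>b\<in>C. to_real a \<noteq> to_real b)\<close> by blast
      then show ?thesis using collinear_subset collinear_sing by blast
    qed simp
  qed
  ultimately obtain p q r where "p \<in> C" "q \<in> C" "r \<in> C" "\<not> collinear {to_real p, to_real q, to_real r}"
    by blast
  then show ?thesis using that collinear_to_real_iff by blast
qed

lemma coords_exist:
  assumes C: "aff_dim (to_real ` C) = 2" and "p \<in> C" "q \<in> C" "r \<in> C" "z \<in> C"
    and minor: "minor i j (q - p) (r - p) \<noteq> 0"
  obtains s h where "coords p q r z s h"
proof -
  let ?S = "{to_real p, to_real q, to_real r}"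
  have sub: "?S \<subseteq> to_real ` C" using assms by auto
  have "\<not> collinear ?S" using minor collinear_to_real_iff by blast
  then have "aff_dim ?S = aff_dim (to_real ` C)"
    using aff_dim_subset[OF sub] C by (simp add: collinear_aff_dim)
  then have "affine hull ?S = affine hull (to_real ` C)"
    by (intro affine_dim_equal hull_mono sub) simp_all
  then have "to_real z \<in> affine hull ?S" using assms by (auto intro: hull_inc)
  then obtain u v w where uvw: "to_real z = u *\<^sub>R to_real p + v *\<^sub>R to_real q + w *\<^sub>R to_real r"
    "u + v + w = 1"
    unfolding affine_hull_3 by blast
  have "coords p q r z v (- w)"
    unfolding coords_def
  proof
    fix k
    have "real_of_int (z $ k) = u * real_of_int (p $ k) + v * real_of_int (q $ k) + w * real_of_int (r $ k)"
      using uvw(1) by (simp add: vec_eq_iff)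
    moreover have "u = 1 - v - w" using uvw(2) by linarith
    ultimately show "real_of_int (z $ k) = real_of_int (p $ k) + v * (real_of_int (q $ k) - real_of_int (p $ k))
        + - w * (real_of_int (p $ k) - real_of_int (r $ k))"
      by (simp add: algebra_simps)
  qed
  then show ?thesis by (rule that)
qed

lemma Lam_subset_affine_hull:
  assumes "T \<noteq> {}"
  shows "Lam T \<subseteq> {x. to_real x \<in> affine hull (to_real ` T)}"
proof (rule Lam_least)
  show T: "T \<subseteq> {x. to_real x \<in> affine hull (to_real ` T)}" by (auto intro: hull_inc)
  have closed: "to_real (x + y - z) \<in> affine hull (to_real ` T)"
    if "to_real x \<in> affine hull (to_real ` T)" "to_real y \<in> affine hull (to_real ` T)"
      "to_real z \<in> affine hull (to_real ` T)" for x y z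
  proof -
    have "to_real x + 1 *\<^sub>R (to_real y - to_real z) \<in> affine hull (to_real ` T)"
      by (rule mem_affine_3_minus[OF affine_affine_hull that])
    moreover have "to_real (x + y - z) = to_real x + 1 *\<^sub>R (to_real y - to_real z)"
      by (simp add: vec_eq_iff)
    ultimately show ?thesis by simp
  qed
  show "is_coset {x. to_real x \<in> affine hull (to_real ` T)}"
    unfolding is_coset_iff
  proof (intro conjI ballI)
    show "{x. to_real x \<in> affine hull (to_real ` T)} \<noteq> {}" using assms T by blast
  qed (simp add: closed)
qed

lemma is_coset_triangle_lattice: "is_coset {p + a *s (q - p) + b *s (p - r) | a b. True}"
  unfolding is_coset_iff
proof (intro conjI ballI)
  fix x y z assume "x \<in> {p + a *s (q - p) + b *s (p - r) | a b. True}"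
    "y \<in> {p + a *s (q - p) + b *s (p - r) | a b. True}" "z \<in> {p + a *s (q - p) + b *s (p - r) | a b. True}"
  then obtain a1 b1 a2 b2 a3 b3 where xyz: "x = p + a1 *s (q - p) + b1 *s (p - r)"
    "y = p + a2 *s (q - p) + b2 *s (p - r)" "z = p + a3 *s (q - p) + b3 *s (p - r)"
    by blast
  have "x + y - z = p + (a1 + a2 - a3) *s (q - p) + (b1 + b2 - b3) *s (p - r)"
    unfolding xyz by (simp add: vec_eq_iff algebra_simps)
  then show "x + y - z \<in> {p + a *s (q - p) + b *s (p - r) | a b. True}" by blast
qed blast

context move_closed
begin

lemma min_minor_exists:
  assumes "p0 \<in> C" "q0 \<in> C" "r0 \<in> C" "minor i j (q0 - p0) (r0 - p0) \<noteq> 0"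
  obtains p q r where "p \<in> C" "q \<in> C" "r \<in> C" "min_minor C i j \<bar>minor i j (q - p) (r - p)\<bar>"
proof -
  let ?P = "\<lambda>(a, b, c). a \<in> C \<and> b \<in> C \<and> c \<in> C \<and> minor i j (b - a) (c - a) \<noteq> 0"
  let ?m = "\<lambda>(a, b, c). nat \<bar>minor i j (b - a) (c - a)\<bar>"
  obtain p q r where "?P (p, q, r)" and least: "\<And>t. ?P t \<Longrightarrow> ?m (p, q, r) \<le> ?m t"
    using ex_has_least_nat[of ?P "(p0, q0, r0)" ?m] assms by auto
  have "min_minor_axioms C i j \<bar>minor i j (q - p) (r - p)\<bar>"
  proof
    show "0 < \<bar>minor i j (q - p) (r - p)\<bar>" using \<open>?P (p, q, r)\<close> by simp
    fix a b c assume "a \<in> C" "b \<in> C" "c \<in> C" "minor i j (b - a) (c - a) \<noteq> 0"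
    then have "?m (p, q, r) \<le> ?m (a, b, c)" by (intro least) simp
    then show "\<bar>minor i j (q - p) (r - p)\<bar> \<le> \<bar>minor i j (b - a) (c - a)\<bar>" by simp
  qed
  then have "min_minor C i j \<bar>minor i j (q - p) (r - p)\<bar>"
    by (intro min_minor.intro move_closed_axioms)
  then show ?thesis using \<open>?P (p, q, r)\<close> by (intro that) simp_all
qed

end

context min_minor
begin

lemma subset_triangle_lattice:
  assumes C: "aff_dim (to_real ` C) = 2" and pqr: "p \<in> C" "q \<in> C" "r \<in> C"
    and Dv: "\<bar>minor i j (q - p) (r - p)\<bar> = D"
  shows "C \<subseteq> {p + a *s (q - p) + b *s (p - r) | a b. True}"
proof
  fix z assume z: "z \<in> C"
  have "minor i j (q - p) (r - p) \<noteq> 0" using Dv D_pos by auto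
  then obtain s h where cz: "coords p q r z s h" using coords_exist[OF C pqr z] by blast
  then have "s \<in> \<int> \<and> h \<in> \<int>" by (rule coords_Ints[OF pqr z Dv])
  then obtain a b where "s = of_int a" "h = of_int b" by (auto elim!: Ints_cases)
  then have "real_of_int (z $ k) = real_of_int ((p + a *s (q - p) + b *s (p - r)) $ k)" for k
    using coordsD[OF cz, of k] by (simp add: algebra_simps)
  then have "z = p + a *s (q - p) + b *s (p - r)" by (simp only: of_int_eq_iff vec_eq_iff) blast
  then show "z \<in> {p + a *s (q - p) + b *s (p - r) | a b. True}" by blast
qed

end

lemma (in move_closed) Lam_inter_N0_subset:
  assumes C: "aff_dim (to_real ` C) = 2"
  shows "Lam C \<inter> N0 \<subseteq> C"
proof -
  obtain p0 q0 r0 i j where "p0 \<in> C" "q0 \<in> C" "r0 \<in> C" "minor i j (q0 - p0) (r0 - p0) \<noteq> 0"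
    using nonzero_minor_exists[OF C] by blast
  then obtain p q r where pqr: "p \<in> C" "q \<in> C" "r \<in> C"
    and "min_minor C i j \<bar>minor i j (q - p) (r - p)\<bar>"
    by (rule min_minor_exists)
  then interpret min_minor C i j "\<bar>minor i j (q - p) (r - p)\<bar>" by simp
  have "Lam C \<subseteq> {p + a *s (q - p) + b *s (p - r) | a b. True}"
    by (rule Lam_least[OF is_coset_triangle_lattice subset_triangle_lattice[OF C pqr refl]])
  then show ?thesis using triangle_lattice_mem[OF pqr] by blast
qed

theorem lemma3p5:
  fixes T :: "(int ^ 'n) set"
  assumes "CARD('n) \<ge> 3"
    and "T \<subseteq> N0"
    and "aff_dim (to_real ` T) = 2"
  shows "completion 2 T = Lam T \<inter> N0"
proof -
  let ?C = "completion 2 T"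
  interpret move_closed ?C by (rule move_closed_completion[OF assms(2)])
  have TC: "T \<subseteq> ?C" by (rule subset_completion[OF assms(2)])
  have CL: "?C \<subseteq> Lam T \<inter> N0" by (rule completion_subset[OF assms(2)])
  have "T \<noteq> {}" using assms(3) by auto
  then have "?C \<subseteq> {x. to_real x \<in> affine hull (to_real ` T)}"
    using CL Lam_subset_affine_hull by blast
  then have "aff_dim (to_real ` ?C) \<le> aff_dim (affine hull (to_real ` T))"
    by (intro aff_dim_subset) blast
  moreover have "aff_dim (to_real ` T) \<le> aff_dim (to_real ` ?C)"
    using TC by (intro aff_dim_subset image_mono)
  ultimately have "Lam ?C \<inter> N0 \<subseteq> ?C"
    using assms(3) by (intro Lam_inter_N0_subset) simp
  moreover have "Lam T \<subseteq> Lam ?C"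
    using TC subset_Lam by (intro Lam_subset_Lam) blast
  ultimately show ?thesis using CL by blast
qed

end
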